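(* Let $P:\mathfrak m\to\mathfrak m$ be $P(Z)=\mathrm{ad}_\Upsilon\mathrm{Ad}_{\exp Z}\Upsilon$. Then (1) $P(JZ)=JP(Z)$ for all $Z\in\mathfrak m$; (2) if $Z\in\mathfrak m^+$ or $Z\in\mathfrak m^-$, then $P(Z)=Z$; (3) $P$ is an odd function.
   Context: Let $G$ be a simple complex algebraic group with Lie algebra $\mathfrak g$ and an algebraic involution with $\pm1$-eigenspace decomposition $\mathfrak g=\mathfrak k\oplus\mathfrak m$, arising from an irreducible Hermitian symmetric space: $\Upsilon$ lies in the center of $\mathfrak k$ and $\mathrm{ad}_\Upsilon$ has eigenvalues $\pm i$ on $\mathfrak m$, with eigenspaces $\mathfrak m^+$ ($+i$) and $\mathfrak m^-$ ($-i$); $J=\mathrm{ad}_\Upsilon|_{\mathfrak m}$. (Since $\mathrm{ad}_\Upsilon$ kills $\mathfrak k$ and preserves $\mathfrak m$, $P$ takes values in $\mathfrak m$.) *)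

theory Defs
  imports "HOL-Analysis.Analysis"
begin

text \<open>A finite-dimensional complex Lie algebra is modelled on the coordinate space
  complex^'n (any finite index type 'n), with complex scalar multiplication c *s x.\<close>

definition csubspace :: "(complex^'n) set \<Rightarrow> bool" where
  "csubspace S \<longleftrightarrow> 0 \<in> S \<and> (\<forall>x\<in>S. \<forall>y\<in>S. x + y \<in> S) \<and> (\<forall>c. \<forall>x\<in>S. c *s x \<in> S)"

definition clinear_map :: "(complex^'n \<Rightarrow> complex^'n) \<Rightarrow> bool" where
  "clinear_map f \<longleftrightarrow> (\<forall>x y. f (x + y) = f x + f y) \<and> (\<forall>c x. f (c *s x) = c *s f x)"

definition lie_algebra :: "(complex^'n \<Rightarrow> complex^'n \<Rightarrow> complex^'n) \<Rightarrow> bool" where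
  "lie_algebra br \<longleftrightarrow>
     (\<forall>x y z. br (x + y) z = br x z + br y z) \<and>
     (\<forall>c x y. br (c *s x) y = c *s br x y) \<and>
     (\<forall>x y. br x y = - br y x) \<and>
     (\<forall>x y z. br x (br y z) + br y (br z x) + br z (br x y) = 0)"

definition lie_ideal :: "(complex^'n \<Rightarrow> complex^'n \<Rightarrow> complex^'n) \<Rightarrow> (complex^'n) set \<Rightarrow> bool" where
  "lie_ideal br I \<longleftrightarrow> csubspace I \<and> (\<forall>x y. y \<in> I \<longrightarrow> br x y \<in> I)"

definition simple_lie_algebra :: "(complex^'n \<Rightarrow> complex^'n \<Rightarrow> complex^'n) \<Rightarrow> bool" where
  "simple_lie_algebra br \<longleftrightarrow> lie_algebra br \<and> (\<exists>x y. br x y \<noteq> 0) \<and>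
     (\<forall>I. lie_ideal br I \<longrightarrow> I = {0} \<or> I = UNIV)"

text \<open>Involutive Lie algebra automorphism (differential of the algebraic involution of G).\<close>
definition lie_involution :: "(complex^'n \<Rightarrow> complex^'n \<Rightarrow> complex^'n) \<Rightarrow> (complex^'n \<Rightarrow> complex^'n) \<Rightarrow> bool" where
  "lie_involution br \<theta> \<longleftrightarrow> clinear_map \<theta> \<and> (\<forall>x y. \<theta> (br x y) = br (\<theta> x) (\<theta> y)) \<and> (\<forall>x. \<theta> (\<theta> x) = x)"

text \<open>Ad_{exp Z} X = exp(ad_Z) X, written as the exponential series.\<close>
definition Ad_exp :: "(complex^'n \<Rightarrow> complex^'n \<Rightarrow> complex^'n) \<Rightarrow> complex^'n \<Rightarrow> complex^'n \<Rightarrow> complex^'n" where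
  "Ad_exp br Z X = (\<Sum>k. inverse (fact k) *\<^sub>R ((br Z ^^ k) X))"

end

theory Submission
  imports Defs
begin

(* A Lie algebra automorphism \<sigma> commutes with the exponential series, so if \<sigma> fixes \<Upsilon> then
   P (\<sigma> Z) = \<sigma> (P Z). Moreover ad \<Upsilon> maps everything into \<mm>, hence so does P. Applied to the
   involution \<theta>, which is -1 on \<mm>, this gives oddness; applied to exp((\<pi>/2) ad \<Upsilon>), which is
   the identity on \<kk> and J on \<mm>, it gives P (J Z) = J (P Z). For an eigenvector Z of ad \<Upsilon>
   with eigenvalue \<plusminus>\<i> one has (ad Z)\<^sup>2 \<Upsilon> = 0, so the series stops after two terms and P Z = Z. *)

lemma clinear_map_imp_bounded_linear:
  fixes f :: "complex^'n \<Rightarrow> complex^'n"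
  assumes "clinear_map f"
  shows "bounded_linear f"
proof -
  have "r *\<^sub>R x = complex_of_real r *s x" for r and x :: "complex^'n"
    by (simp only: vec_eq_iff vector_scaleR_component vector_smult_component)
      (simp add: scaleR_conv_of_real)
  then have "linear f"
    using assms by (intro linearI) (simp_all add: clinear_map_def)
  then show ?thesis
    by (simp add: linear_conv_bounded_linear)
qed

lemma summable_exp_series_bounded_linear:
  fixes L :: "'a::banach \<Rightarrow> 'a"
  assumes "bounded_linear L"
  shows "summable (\<lambda>k. inverse (fact k) *\<^sub>R (L ^^ k) x)"
proof -
  obtain K where K: "K > 0" "\<And>x. norm (L x) \<le> norm x * K"
    using bounded_linear.pos_bounded[OF assms] by blast
  have power_bound: "norm ((L ^^ k) x) \<le> K ^ k * norm x" for k
  proof (induction k)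
    case 0
    then show ?case by simp
  next
    case (Suc k)
    have "norm ((L ^^ Suc k) x) \<le> norm ((L ^^ k) x) * K"
      using K(2) by simp
    also have "\<dots> \<le> K ^ k * norm x * K"
      using Suc K(1) by (simp add: mult_right_mono)
    finally show ?case
      by (simp add: algebra_simps)
  qed
  have majorant: "summable (\<lambda>k. norm x * (K ^ k /\<^sub>R fact k))"
    by (intro summable_mult summable_exp_generic)
  have bound: "norm (inverse (fact k) *\<^sub>R (L ^^ k) x) \<le> norm x * (K ^ k /\<^sub>R fact k)" for k
    using mult_left_mono[OF power_bound, of "inverse (fact k)" k] by (simp add: field_simps)
  show ?thesis
    by (rule summable_comparison_test'[OF majorant]) (rule bound)
qed

definition lie_endomorphism ::
    "(complex^'n \<Rightarrow> complex^'n \<Rightarrow> complex^'n) \<Rightarrow> (complex^'n \<Rightarrow> complex^'n) \<Rightarrow> bool" where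
  "lie_endomorphism br \<sigma> \<longleftrightarrow> clinear_map \<sigma> \<and> (\<forall>x y. \<sigma> (br x y) = br (\<sigma> x) (\<sigma> y))"

locale lie_bracket =
  fixes br :: "complex^'n \<Rightarrow> complex^'n \<Rightarrow> complex^'n"
  assumes lie_algebra: "lie_algebra br"
begin

lemma bracket_add_left: "br (x + y) z = br x z + br y z"
  using lie_algebra unfolding lie_algebra_def by blast

lemma bracket_scale_left: "br (c *s x) y = c *s br x y"
  using lie_algebra unfolding lie_algebra_def by blast

lemma bracket_antisym: "br x y = - br y x"
  using lie_algebra unfolding lie_algebra_def by blast

lemma bracket_jacobi: "br x (br y z) + br y (br z x) + br z (br x y) = 0"
  using lie_algebra unfolding lie_algebra_def by blast

lemma bracket_add_right: "br x (y + z) = br x y + br x z"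
  by (metis bracket_add_left bracket_antisym minus_add_distrib)

lemma bracket_scale_right: "br x (c *s y) = c *s br x y"
  by (metis bracket_antisym bracket_scale_left vector_smult_rneg)

lemma bracket_minus_left: "br (- x) y = - br x y"
  by (metis bracket_scale_left vector_sneg_minus1)

lemma bracket_minus_right: "br x (- y) = - br x y"
  by (metis bracket_scale_right vector_sneg_minus1)

lemma bracket_self: "br x x = 0"
  using bracket_antisym[of x x] by (simp add: vec_eq_iff)

lemma bracket_zero_left: "br 0 y = 0"
  by (metis bracket_add_left add_cancel_right_right)

lemma bracket_zero_right: "br x 0 = 0"
  by (metis bracket_add_right add_cancel_right_right)

lemma bracket_diff_right: "br x (y - z) = br x y - br x z"
  by (metis bracket_add_right bracket_minus_right diff_conv_add_uminus)

lemmas bracket_simps = bracket_add_left bracket_add_right bracket_scale_left bracket_scale_right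
  bracket_diff_right bracket_minus_left bracket_minus_right bracket_self bracket_zero_left bracket_zero_right

lemma bracket_derivation: "br u (br v w) = br (br u v) w + br v (br u w)"
proof -
  have "br u (br v w) = - br v (br w u) - br w (br u v)"
    using bracket_jacobi[of u v w] by (simp add: eq_neg_iff_add_eq_0 algebra_simps)
  moreover have "br v (br w u) = - br v (br u w)"
    using bracket_antisym[of w u] by (simp add: bracket_minus_right)
  moreover have "br w (br u v) = - br (br u v) w"
    by (rule bracket_antisym)
  ultimately show ?thesis
    by simp
qed

lemma bounded_linear_bracket: "bounded_linear (br x)"
  by (rule clinear_map_imp_bounded_linear) (simp add: clinear_map_def bracket_simps)

lemma Ad_exp_summable: "summable (\<lambda>k. inverse (fact k) *\<^sub>R (br Z ^^ k) X)"
  by (rule summable_exp_series_bounded_linear[OF bounded_linear_bracket])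

lemma lie_endomorphism_Ad_exp:
  assumes "lie_endomorphism br \<sigma>"
  shows "\<sigma> (Ad_exp br Z X) = Ad_exp br (\<sigma> Z) (\<sigma> X)"
proof -
  have lin: "bounded_linear \<sigma>"
    using assms by (simp add: lie_endomorphism_def clinear_map_imp_bounded_linear)
  have powers: "\<sigma> ((br Z ^^ k) X) = (br (\<sigma> Z) ^^ k) (\<sigma> X)" for k
    using assms by (induction k) (simp_all add: lie_endomorphism_def)
  have "\<sigma> (Ad_exp br Z X) = (\<Sum>k. \<sigma> (inverse (fact k) *\<^sub>R (br Z ^^ k) X))"
    unfolding Ad_exp_def by (rule bounded_linear.suminf[OF lin Ad_exp_summable])
  also have "\<dots> = Ad_exp br (\<sigma> Z) (\<sigma> X)"
    by (simp add: Ad_exp_def powers linear_simps[OF lin])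
  finally show ?thesis .
qed

lemma Ad_exp_nilpotent2:
  assumes "br Z (br Z X) = 0"
  shows "Ad_exp br Z X = X + br Z X"
proof -
  have "(br Z ^^ Suc (Suc j)) X = 0" for j
    by (induction j) (simp_all add: assms bracket_zero_right)
  then have "(br Z ^^ k) X = 0" if "k \<notin> {0, 1}" for k
    using that by (metis insert_iff not0_implies_Suc One_nat_def)
  then have "Ad_exp br Z X = (\<Sum>k\<in>{0, 1}. inverse (fact k) *\<^sub>R (br Z ^^ k) X)"
    unfolding Ad_exp_def by (intro suminf_finite) simp_all
  then show ?thesis
    by simp
qed

lemma bracket_twice_eigenvector:
  assumes "br Y Z = c *s Z" and "c * c = -1"
  shows "br Y (br Y Z) = - Z"
  using assms by (simp add: bracket_scale_right vector_smult_assoc vector_smult_lneg)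

lemma bracket_Ad_exp_eigenvector:
  assumes eigen: "br Y Z = c *s Z" and "c * c = -1"
  shows "br Y (Ad_exp br Z Y) = Z"
proof -
  have ZY: "br Z Y = - (c *s Z)"
    using eigen bracket_antisym[of Z Y] by simp
  then have "Ad_exp br Z Y = Y - c *s Z"
    by (simp add: Ad_exp_nilpotent2 bracket_simps)
  then show ?thesis
    using assms by (simp add: bracket_simps vector_smult_assoc vector_smult_lneg)
qed

end

locale involutive_lie_algebra = lie_bracket +
  fixes \<theta> :: "complex^'n \<Rightarrow> complex^'n"
  assumes lie_involution: "lie_involution br \<theta>"
begin

abbreviation \<kk> where "\<kk> \<equiv> {X. \<theta> X = X}"
abbreviation \<mm> where "\<mm> \<equiv> {X. \<theta> X = - X}"

lemma \<theta>_add: "\<theta> (x + y) = \<theta> x + \<theta> y"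
  using lie_involution by (simp add: lie_involution_def clinear_map_def)

lemma \<theta>_scale: "\<theta> (c *s x) = c *s \<theta> x"
  using lie_involution by (simp add: lie_involution_def clinear_map_def)

lemma \<theta>_minus: "\<theta> (- x) = - \<theta> x"
  by (metis \<theta>_scale vector_sneg_minus1)

lemma \<theta>_diff: "\<theta> (x - y) = \<theta> x - \<theta> y"
  by (metis \<theta>_add \<theta>_minus diff_conv_add_uminus)

lemma \<theta>_bracket: "\<theta> (br x y) = br (\<theta> x) (\<theta> y)"
  using lie_involution by (simp add: lie_involution_def)

lemma \<theta>_\<theta>: "\<theta> (\<theta> x) = x"
  using lie_involution by (simp add: lie_involution_def)

lemma lie_endomorphism_\<theta>: "lie_endomorphism br \<theta>"
  using lie_involution by (simp add: lie_involution_def lie_endomorphism_def)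

definition k_part :: "complex^'n \<Rightarrow> complex^'n" where
  "k_part X = (1/2) *s (X + \<theta> X)"

lemma k_part_in_k: "k_part X \<in> \<kk>"
  by (simp add: k_part_def \<theta>_scale \<theta>_add \<theta>_\<theta> add.commute)

lemma k_part_k: "X \<in> \<kk> \<Longrightarrow> k_part X = X"
  by (simp add: k_part_def vec_eq_iff)

lemma k_part_m: "X \<in> \<mm> \<Longrightarrow> k_part X = 0"
  by (simp add: k_part_def)

lemma clinear_map_k_part: "clinear_map k_part"
  by (simp add: clinear_map_def k_part_def \<theta>_add \<theta>_scale vec_eq_iff field_simps)

lemma k_part_plus_m_part: "X = k_part X + (X - k_part X)" and m_part_in_m: "X - k_part X \<in> \<mm>"
  by (simp_all add: k_part_def \<theta>_add \<theta>_diff \<theta>_scale \<theta>_\<theta> vec_eq_iff field_simps)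

lemma bracket_k_k: "X \<in> \<kk> \<Longrightarrow> Y \<in> \<kk> \<Longrightarrow> br X Y \<in> \<kk>"
  and bracket_k_m: "X \<in> \<kk> \<Longrightarrow> Y \<in> \<mm> \<Longrightarrow> br X Y \<in> \<mm>"
  and bracket_m_m: "X \<in> \<mm> \<Longrightarrow> Y \<in> \<mm> \<Longrightarrow> br X Y \<in> \<kk>"
  by (simp_all add: \<theta>_bracket bracket_simps)

end

locale hermitian_lie_algebra =
  involutive_lie_algebra br \<theta> for br :: "complex^'n \<Rightarrow> complex^'n \<Rightarrow> complex^'n" and \<theta> +
  fixes \<Upsilon>
  assumes \<Upsilon>_in_k: "\<Upsilon> \<in> \<kk>"
    and \<Upsilon>_central: "X \<in> \<kk> \<Longrightarrow> br \<Upsilon> X = 0"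
begin

abbreviation P where "P Z \<equiv> br \<Upsilon> (Ad_exp br Z \<Upsilon>)"

lemma bracket_\<Upsilon>_in_m: "br \<Upsilon> X \<in> \<mm>"
proof -
  have "br \<Upsilon> (X + \<theta> X) = 0"
    by (rule \<Upsilon>_central) (simp add: \<theta>_add \<theta>_\<theta> add.commute)
  then have "br \<Upsilon> (\<theta> X) = - br \<Upsilon> X"
    by (simp add: bracket_add_right add_eq_0_iff add.commute)
  then show ?thesis
    using \<Upsilon>_in_k by (simp add: \<theta>_bracket)
qed

lemma P_lie_endomorphism:
  assumes "lie_endomorphism br \<sigma>" and "\<sigma> \<Upsilon> = \<Upsilon>"
  shows "P (\<sigma> Z) = \<sigma> (P Z)"
  using assms lie_endomorphism_Ad_exp[OF assms(1)] by (simp add: lie_endomorphism_def)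

lemma P_odd: "Z \<in> \<mm> \<Longrightarrow> P (- Z) = - P Z"
  using P_lie_endomorphism[OF lie_endomorphism_\<theta>, of Z] \<Upsilon>_in_k bracket_\<Upsilon>_in_m by simp

(* This is exp((\<pi>/2) ad \<Upsilon>): ad \<Upsilon> vanishes on \<kk> and squares to -1 on \<mm>. *)
definition quarter_turn :: "complex^'n \<Rightarrow> complex^'n" where
  "quarter_turn X = k_part X + br \<Upsilon> X"

lemma quarter_turn_k: "X \<in> \<kk> \<Longrightarrow> quarter_turn X = X"
  by (simp add: quarter_turn_def k_part_k \<Upsilon>_central)

lemma quarter_turn_m: "X \<in> \<mm> \<Longrightarrow> quarter_turn X = br \<Upsilon> X"
  by (simp add: quarter_turn_def k_part_m)

lemma clinear_map_quarter_turn: "clinear_map quarter_turn"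
  using clinear_map_k_part
  by (simp add: clinear_map_def quarter_turn_def bracket_simps vector_add_ldistrib)

lemma quarter_turn_bracket_k_m:
  assumes "X \<in> \<kk>" and "Y \<in> \<mm>"
  shows "quarter_turn (br X Y) = br (quarter_turn X) (quarter_turn Y)"
proof -
  have "quarter_turn (br X Y) = br \<Upsilon> (br X Y)"
    by (rule quarter_turn_m[OF bracket_k_m[OF assms]])
  also have "\<dots> = br X (br \<Upsilon> Y)"
    using assms(1) by (simp add: bracket_derivation[of \<Upsilon> X Y] \<Upsilon>_central bracket_zero_left)
  also have "\<dots> = br (quarter_turn X) (quarter_turn Y)"
    using assms by (simp add: quarter_turn_k quarter_turn_m)
  finally show ?thesis .
qed

lemma quarter_turn_bracket_m_m:
  assumes J_squared: "\<And>X. X \<in> \<mm> \<Longrightarrow> br \<Upsilon> (br \<Upsilon> X) = - X"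
    and "X \<in> \<mm>" and "Y \<in> \<mm>"
  shows "quarter_turn (br X Y) = br (quarter_turn X) (quarter_turn Y)"
proof -
  have "0 = br \<Upsilon> (br X (br \<Upsilon> Y))"
    by (rule \<Upsilon>_central[OF bracket_m_m[OF assms(2) bracket_\<Upsilon>_in_m], symmetric])
  also have "\<dots> = br (br \<Upsilon> X) (br \<Upsilon> Y) - br X Y"
    using assms by (simp add: bracket_derivation[of \<Upsilon> X "br \<Upsilon> Y"] bracket_minus_right)
  finally have J_bracket: "br (br \<Upsilon> X) (br \<Upsilon> Y) = br X Y"
    by simp
  have "quarter_turn (br X Y) = br X Y"
    by (rule quarter_turn_k[OF bracket_m_m[OF assms(2,3)]])
  with J_bracket show ?thesis
    using assms(2,3) by (simp add: quarter_turn_m)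
qed

lemma lie_endomorphism_quarter_turn:
  assumes J_squared: "\<And>X. X \<in> \<mm> \<Longrightarrow> br \<Upsilon> (br \<Upsilon> X) = - X"
  shows "lie_endomorphism br quarter_turn"
proof -
  have add: "quarter_turn (X + Y) = quarter_turn X + quarter_turn Y"
    and minus: "quarter_turn (- X) = - quarter_turn X" for X Y
    using clinear_map_quarter_turn unfolding clinear_map_def by (metis, metis vector_sneg_minus1)
  have k_k: "quarter_turn (br X Y) = br (quarter_turn X) (quarter_turn Y)"
    if "X \<in> \<kk>" and "Y \<in> \<kk>" for X Y
    using that by (simp add: quarter_turn_k[OF bracket_k_k[OF that]] quarter_turn_k)
  have m_k: "quarter_turn (br X Y) = br (quarter_turn X) (quarter_turn Y)"
    if "X \<in> \<mm>" and "Y \<in> \<kk>" for X Y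
  proof -
    have "quarter_turn (br X Y) = - quarter_turn (br Y X)"
      by (simp add: bracket_antisym[of X Y] minus)
    also have "\<dots> = - br (quarter_turn Y) (quarter_turn X)"
      by (simp add: quarter_turn_bracket_k_m[OF that(2,1)])
    finally show ?thesis
      by (simp add: bracket_antisym[of "quarter_turn Y"])
  qed
  have "quarter_turn (br X Y) = br (quarter_turn X) (quarter_turn Y)" for X Y
  proof -
    define a b c d where "a = k_part X" "b = X - k_part X" "c = k_part Y" "d = Y - k_part Y"
    have parts: "a \<in> \<kk>" "b \<in> \<mm>" "c \<in> \<kk>" "d \<in> \<mm>" "X = a + b" "Y = c + d"
      unfolding a_b_c_d_def using k_part_in_k m_part_in_m k_part_plus_m_part by simp_all
    have "quarter_turn (br X Y)
        = quarter_turn (br a c) + quarter_turn (br a d) + quarter_turn (br b c) + quarter_turn (br b d)"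
      by (simp add: parts(5,6) bracket_add_left bracket_add_right add)
    also have "\<dots> = br (quarter_turn a) (quarter_turn c) + br (quarter_turn a) (quarter_turn d)
        + br (quarter_turn b) (quarter_turn c) + br (quarter_turn b) (quarter_turn d)"
      by (simp only: k_k[OF parts(1,3)] quarter_turn_bracket_k_m[OF parts(1,4)] m_k[OF parts(2,3)]
          quarter_turn_bracket_m_m[OF J_squared parts(2,4)])
    also have "\<dots> = br (quarter_turn X) (quarter_turn Y)"
      by (simp add: parts(5,6) bracket_add_left bracket_add_right add)
    finally show ?thesis .
  qed
  then show ?thesis
    by (simp add: lie_endomorphism_def clinear_map_quarter_turn)
qed

lemma P_J:
  assumes "\<And>X. X \<in> \<mm> \<Longrightarrow> br \<Upsilon> (br \<Upsilon> X) = - X" and "Z \<in> \<mm>"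
  shows "P (br \<Upsilon> Z) = br \<Upsilon> (P Z)"
  using P_lie_endomorphism[OF lie_endomorphism_quarter_turn[OF assms(1)], of Z]
  by (simp add: quarter_turn_k[OF \<Upsilon>_in_k] quarter_turn_m[OF assms(2)] quarter_turn_m[OF bracket_\<Upsilon>_in_m])

end

theorem lemma4p11:
  fixes br :: "complex^'n \<Rightarrow> complex^'n \<Rightarrow> complex^'n"
    and \<theta> :: "complex^'n \<Rightarrow> complex^'n"
    and \<Upsilon> :: "complex^'n"
    and k m mplus mminus :: "(complex^'n) set"
    and J P :: "complex^'n \<Rightarrow> complex^'n"
  assumes simple: "simple_lie_algebra br"
    and inv: "lie_involution br \<theta>"
    and k_def: "k = {X. \<theta> X = X}"
    and m_def: "m = {X. \<theta> X = - X}"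
    and Ups_k: "\<Upsilon> \<in> k"
    and Ups_central: "\<forall>X\<in>k. br \<Upsilon> X = 0"
    and mplus_def: "mplus = {X \<in> m. br \<Upsilon> X = \<i> *s X}"
    and mminus_def: "mminus = {X \<in> m. br \<Upsilon> X = - \<i> *s X}"
    and m_decomp: "\<forall>X\<in>m. \<exists>A\<in>mplus. \<exists>B\<in>mminus. X = A + B"
    and mplus_nz: "mplus \<noteq> {0}"
    and mminus_nz: "mminus \<noteq> {0}"
    and J_def: "\<forall>Z. J Z = br \<Upsilon> Z"
    and P_def: "\<forall>Z. P Z = br \<Upsilon> (Ad_exp br Z \<Upsilon>)"
  shows "(\<forall>Z\<in>m. P (J Z) = J (P Z))
       \<and> (\<forall>Z. Z \<in> mplus \<or> Z \<in> mminus \<longrightarrow> P Z = Z)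
       \<and> (\<forall>Z\<in>m. P (- Z) = - P Z)"
proof -
  interpret hermitian_lie_algebra br \<theta> \<Upsilon>
    using simple inv Ups_k Ups_central
    by unfold_locales (auto simp: simple_lie_algebra_def k_def)
  have J_squared: "br \<Upsilon> (br \<Upsilon> X) = - X" if "X \<in> m" for X
  proof -
    obtain A B where "A \<in> mplus" "B \<in> mminus" and X: "X = A + B"
      using m_decomp \<open>X \<in> m\<close> by blast
    then have "br \<Upsilon> (br \<Upsilon> A) = - A" and "br \<Upsilon> (br \<Upsilon> B) = - B"
      using bracket_twice_eigenvector[of \<Upsilon> A \<i>] bracket_twice_eigenvector[of \<Upsilon> B "- \<i>"]
      by (simp_all add: mplus_def mminus_def)
    then show ?thesis
      by (simp add: X bracket_add_right)
  qed
  have "P Z = Z" if "Z \<in> mplus \<or> Z \<in> mminus" for Z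
    using that bracket_Ad_exp_eigenvector[of \<Upsilon> Z \<i>] bracket_Ad_exp_eigenvector[of \<Upsilon> Z "- \<i>"]
    by (auto simp: P_def mplus_def mminus_def)
  then show ?thesis
    using P_J[OF J_squared] P_odd by (simp add: J_def P_def m_def)
qed

end
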